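(* Let $p$ be an odd prime and let $n,s$ be positive integers such that $r=2n/s\geq 3$ is an odd integer; put $q=p^n$ and $d=p^s$. There is $\mu\in\mathbb{F}_{q^2}\setminus\mathbb{F}_q$ such that, writing $\mu^d=u_1+u_2\mu$ with $u_1,u_2\in\mathbb{F}_q$, the element $u_2$ is a $(d-1)$-th power of an element of $\mathbb{F}_{q^2}$.
   Context: $\mathbb{F}_q$ denotes the subfield of $\mathbb{F}_{q^2}$ of order $q$; every element of $\mathbb{F}_{q^2}$ can be written uniquely as $a+b\mu$ with $a,b\in\mathbb{F}_q$ when $\mu\notin\mathbb{F}_q$. *)

theory Defs
  imports "HOL-Computational_Algebra.Primes"
begin

text \<open>In a finite field of order q^2, the subfield F_q of order q is the set of
  fixed points of the Frobenius power x \<mapsto> x^q.\<close>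
definition Fsub :: "nat \<Rightarrow> ('a::field) set" where
  "Fsub q = {x. x ^ q = x}"

end

theory Submission
  imports Defs "HOL-Computational_Algebra.Polynomial"
begin

text \<open>The fixed points of \<open>x \<mapsto> x^d\<close>, \<open>d = p^s\<close>, form a subfield of order \<open>d\<close> because
  \<open>s\<close> divides \<open>2n\<close>. Since \<open>2n/s = 2k + 1\<close> is odd, \<open>s = 2t\<close> and \<open>q = d^k p^t\<close>, so
  \<open>x^q = x^(p^t)\<close> on that subfield. A counting argument with roots of unity yields
  some \<open>\<mu>\<close> with \<open>\<mu>^d = \<mu>\<close> but \<open>\<mu>^(p^t) \<noteq> \<mu>\<close>, so \<open>\<mu> \<notin> F_q\<close>, and then \<open>\<mu>^d = 0 + 1 \<cdot> \<mu>\<close>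
  with \<open>1 = 1^(d-1)\<close>.\<close>

lemma finite_field_power_card_minus_one:
  fixes x :: "'a::{field,finite}"
  assumes "x \<noteq> 0"
  shows "x ^ (card (UNIV :: 'a set) - 1) = 1"
proof -
  let ?U = "UNIV - {0::'a}"
  have "bij_betw ((*) x) ?U ?U"
    by (rule bij_betw_byWitness[where f' = "\<lambda>y. y / x"]) (use assms in auto)
  then have "(\<Prod>y\<in>?U. x * y) = \<Prod>?U"
    by (rule prod.reindex_bij_betw)
  moreover have "(\<Prod>y\<in>?U. x * y) = x ^ card ?U * \<Prod>?U"
    by (simp add: prod.distrib)
  moreover have "\<Prod>?U \<noteq> 0"
    by simp
  ultimately show ?thesis
    by (simp add: card_Diff_singleton)
qed

lemma card_roots_unity_le:
  assumes "K > 0"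
  shows "card {z::'a::idom. z ^ K = 1} \<le> K"
proof -
  define P :: "'a poly" where "P = monom 1 K - 1"
  have roots: "{z. poly P z = 0} = {z. z ^ K = 1}"
    by (simp add: P_def poly_monom)
  have "P \<noteq> 0"
  proof
    assume "P = 0"
    then have "poly P 0 = 0"
      by simp
    with assms show False
      by (simp add: P_def poly_monom zero_power)
  qed
  then have "card {z. poly P z = 0} \<le> degree P"
    by (rule card_poly_roots_bound)
  also have "degree P \<le> K"
    unfolding P_def by (rule degree_diff_le) (auto intro: degree_monom_le)
  finally show ?thesis
    by (simp add: roots)
qed

lemma power_power_eq_self:
  fixes y :: "'a::monoid_mult"
  assumes "y ^ D = y"
  shows "y ^ (D ^ k) = y"
  by (induction k) (simp_all add: power_mult assms mult.commute[of D])

lemma nat_power_diff_1_eq: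
  fixes D :: nat
  assumes "D \<ge> 1"
  shows "D ^ r - 1 = (D - 1) * (\<Sum>i<r. D ^ i)"
proof -
  have "int (D ^ r - 1) = int D ^ r - 1"
    using assms by (simp add: of_nat_diff)
  also have "\<dots> = (int D - 1) * (\<Sum>i<r. int D ^ i)"
    by (rule power_diff_1_eq)
  also have "\<dots> = int ((D - 1) * (\<Sum>i<r. D ^ i))"
    using assms by (simp add: of_nat_diff)
  finally show ?thesis
    by (simp only: of_nat_eq_iff)
qed

text \<open>With \<open>|F| - 1 = (D - 1) m\<close>, every \<open>m\<close>-th power is a fixed point of \<open>y \<mapsto> y^D\<close>; if all of
  these were also fixed by \<open>y \<mapsto> y^e\<close>, every nonzero element would be a root of unity of
  order dividing \<open>m (e - 1) < |F| - 1\<close>, which is too few.\<close>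

lemma finite_field_exists_power_fixed_not_power_fixed:
  fixes D e r :: nat
  assumes card: "card (UNIV :: ('a::{field,finite}) set) = D ^ r" and "r > 0" "1 < e" "e < D"
  shows "\<exists>y::'a. y ^ D = y \<and> y ^ e \<noteq> y"
proof (rule ccontr)
  assume fixed: "\<not> ?thesis"
  define m where "m = (\<Sum>i<r. D ^ i)"
  have card_m: "card (UNIV :: 'a set) - 1 = (D - 1) * m"
    unfolding card m_def using \<open>e < D\<close> by (intro nat_power_diff_1_eq) simp
  have "D ^ 0 \<le> m"
    unfolding m_def using \<open>r > 0\<close> by (intro member_le_sum) auto
  then have "1 \<le> m"
    by simp
  have unity: "x ^ (m * (e - 1)) = 1" if "x \<noteq> 0" for x :: 'a
  proof -
    define y where "y = x ^ m"
    have "y ^ (D - 1) = 1"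
      unfolding y_def power_mult[symmetric] mult.commute[of m]
      using finite_field_power_card_minus_one[OF that] card_m by simp
    then have "y ^ D = y"
      using \<open>e < D\<close> by (metis power_minus_mult less_nat_zero_code mult_1_left neq0_conv)
    then have "y ^ e = y"
      using fixed by blast
    moreover have "y \<noteq> 0"
      unfolding y_def using that by simp
    ultimately have "y ^ (e - 1) = 1"
      using \<open>1 < e\<close> by (metis power_minus_mult less_nat_zero_code mult_cancel_right1 neq0_conv)
    then show ?thesis
      unfolding y_def by (simp add: power_mult)
  qed
  have "card (UNIV :: 'a set) - 1 = card (UNIV - {0::'a})"
    by (simp add: card_Diff_singleton)
  also have "\<dots> \<le> card {x::'a. x ^ (m * (e - 1)) = 1}"
    using unity by (intro card_mono) auto
  also have "\<dots> \<le> m * (e - 1)"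
    using \<open>1 \<le> m\<close> \<open>1 < e\<close> by (intro card_roots_unity_le) simp
  also have "\<dots> < card (UNIV :: 'a set) - 1"
    unfolding card_m using \<open>1 \<le> m\<close> \<open>1 < e\<close> \<open>e < D\<close> by simp
  finally show False
    by simp
qed

theorem lemma4:
  fixes p n s :: nat
  assumes "prime p" "odd p" "n > 0" "s > 0"
    and "s dvd 2 * n" "odd ((2 * n) div s)" "(2 * n) div s \<ge> 3"
    and "card (UNIV :: ('a::{field,finite}) set) = (p ^ n) ^ 2"
  shows "\<exists>\<mu>::'a. \<mu> \<notin> Fsub (p ^ n) \<and>
           (\<exists>u1 u2. u1 \<in> Fsub (p ^ n) \<and> u2 \<in> Fsub (p ^ n) \<and>
              \<mu> ^ (p ^ s) = u1 + u2 * \<mu> \<and> (\<exists>w::'a. u2 = w ^ (p ^ s - 1)))"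
proof -
  define r where "r = (2 * n) div s"
  have rs: "2 * n = r * s"
    using assms(5) unfolding r_def by simp
  obtain k where r: "r = 2 * k + 1"
    using assms(6) unfolding r_def[symmetric] by (metis oddE)
  have "even (r * s)"
    unfolding rs[symmetric] by simp
  then obtain t where s: "s = 2 * t"
    using r by auto
  have n: "n = k * s + t"
    using rs r s by (simp add: algebra_simps)
  have "1 < p"
    using assms(1) prime_gt_1_nat by blast
  have "0 < t" "t < s"
    using s \<open>s > 0\<close> by simp_all
  then have "1 < p ^ t" "p ^ t < p ^ s"
    using \<open>1 < p\<close> by (metis one_less_power, metis power_strict_increasing)
  moreover have "card (UNIV :: 'a set) = (p ^ s) ^ r"
    using assms(8) rs by (metis power_mult mult.commute)
  ultimately obtain \<mu> :: 'a where \<mu>: "\<mu> ^ (p ^ s) = \<mu>" "\<mu> ^ (p ^ t) \<noteq> \<mu>"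
    using finite_field_exists_power_fixed_not_power_fixed[of "p ^ s" r "p ^ t"] r by auto
  have "\<mu> ^ (p ^ n) = (\<mu> ^ ((p ^ s) ^ k)) ^ (p ^ t)"
    unfolding n by (simp add: power_add power_mult mult.commute[of k])
  then have "\<mu> \<notin> Fsub (p ^ n)"
    using \<mu> by (simp add: Fsub_def power_power_eq_self)
  moreover have "(0::'a) \<in> Fsub (p ^ n)" "(1::'a) \<in> Fsub (p ^ n)"
    using \<open>1 < p\<close> by (simp_all add: Fsub_def)
  moreover have "\<mu> ^ (p ^ s) = 0 + 1 * \<mu>" "(1::'a) = 1 ^ (p ^ s - 1)"
    using \<mu> by simp_all
  ultimately show ?thesis
    by blast
qed

end
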